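(* Let $z\in\mathbb{E}^d$ and $x\in\mathbb{E}^d\setminus\mathbf{B}[z]$. Let $C$ be a circle of radius at least one and $\mu$ an arc of $C$ which is shorter than a quarter circle, with end points $x$ and $y$, oriented from $x$ toward $y$. Assume that the angle between the vector $x-z$ and the (oriented) tangent direction of $\mu$ at $x$ is at most a right angle. Then $y\notin\mathbf{B}[z]$.
   Context: $\mathbf{B}[z]$ denotes the closed unit ball centered at $z$. An arc is a connected subset of a circle containing no pair of antipodal points of the circle. *)

theory Defs
  imports "HOL-Analysis.Analysis"
begin

text \<open>Point of the circle with centre c, radius r, spanned by the orthonormal
pair u, v, at angle t.  The circle is { circ_pt c r u v t | t }.\<close>
definition circ_pt :: "'a::euclidean_space \<Rightarrow> real \<Rightarrow> 'a \<Rightarrow> 'a \<Rightarrow> real \<Rightarrow> 'a" where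
  "circ_pt c r u v t = c + r *\<^sub>R (cos t *\<^sub>R u + sin t *\<^sub>R v)"

end

theory Submission
  imports Defs
begin

text \<open>Write \<open>w = x - z\<close>, \<open>k = 1 - cos \<theta>\<close> and \<open>s = sin \<theta>\<close>. Moving along the circle gives
  \<open>\<bar>y - z\<bar>\<^sup>2 = \<bar>w\<bar>\<^sup>2 - 2 r k (w \<bullet> u) + 2 r s (w \<bullet> v) + 2 r\<^sup>2 k\<close>, where \<open>v\<close> is the tangent
  direction at \<open>x\<close>. The tangent hypothesis makes the \<open>v\<close>-term nonnegative and Cauchy-Schwarz
  bounds \<open>w \<bullet> u\<close> by \<open>a = \<bar>w\<bar> > 1\<close>, leaving the quadratic \<open>a\<^sup>2 - 2 r k a + 2 r\<^sup>2 k\<close>.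
  If \<open>r k \<le> 1\<close> it is increasing for \<open>a \<ge> 1\<close> and exceeds its value \<open>1 + 2 r k (r - 1)\<close> at \<open>1\<close>;
  otherwise its minimum is \<open>(r s)\<^sup>2\<close>, and \<open>s \<ge> k\<close> on a quarter circle gives \<open>r s > 1\<close>.\<close>

lemma vector_derivative_circ_pt_0:
  "vector_derivative (circ_pt c r u v) (at 0) = r *\<^sub>R v"
proof -
  have "(circ_pt c r u v has_vector_derivative r *\<^sub>R v) (at 0)"
    unfolding circ_pt_def[abs_def] by (auto intro!: derivative_eq_intros)
  then show ?thesis
    by (rule vector_derivative_at)
qed

lemma norm_add_orthonormal_squared:
  fixes w u v :: "'a::real_inner"
  assumes "norm u = 1" "norm v = 1" "u \<bullet> v = 0"
  shows "(norm (w + A *\<^sub>R u + B *\<^sub>R v))\<^sup>2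
    = (norm w)\<^sup>2 + 2*A*(w \<bullet> u) + 2*B*(w \<bullet> v) + A\<^sup>2 + B\<^sup>2"
proof -
  have "u \<bullet> u = 1" "v \<bullet> v = 1" "u \<bullet> v = 0" "v \<bullet> u = 0" "w \<bullet> w = (norm w)\<^sup>2"
    using assms by (simp_all add: dot_square_norm inner_commute)
  then show ?thesis
    unfolding power2_norm_eq_inner[of "w + A *\<^sub>R u + B *\<^sub>R v"]
    by (simp add: inner_add_left inner_add_right inner_commute[of u w]
        inner_commute[of v w] power2_eq_square algebra_simps)
qed

lemma circ_pt_dist_squared:
  fixes c u v z :: "'a::euclidean_space" and r t :: real
  assumes "norm u = 1" "norm v = 1" "u \<bullet> v = 0"
  defines "w \<equiv> circ_pt c r u v 0 - z"
  shows "(norm (circ_pt c r u v t - z))\<^sup>2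
    = (norm w)\<^sup>2 - 2*r*(1 - cos t)*(w \<bullet> u) + 2*r * sin t*(w \<bullet> v) + 2*r\<^sup>2*(1 - cos t)"
proof -
  have "circ_pt c r u v t - z = w + (r*(cos t - 1)) *\<^sub>R u + (r * sin t) *\<^sub>R v"
    by (simp add: w_def circ_pt_def algebra_simps)
  then have "(norm (circ_pt c r u v t - z))\<^sup>2
      = (norm w)\<^sup>2 + 2*(r*(cos t - 1))*(w \<bullet> u) + 2*(r * sin t)*(w \<bullet> v)
        + r\<^sup>2*((cos t - 1)\<^sup>2 + (sin t)\<^sup>2)"
    by (simp add: norm_add_orthonormal_squared[OF assms(1-3)] power_mult_distrib distrib_left)
  also have "(cos t - 1)\<^sup>2 + (sin t)\<^sup>2 = 2*(1 - cos t)"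
    using sin_cos_squared_add[of t] by (simp add: power2_diff)
  finally show ?thesis
    by (simp add: algebra_simps)
qed

lemma one_minus_cos_le_sin:
  assumes "0 \<le> t" "t \<le> pi / 2"
  shows "1 - cos t \<le> sin t"
proof -
  have "0 \<le> sin t" "0 \<le> cos t"
    using assms by (auto intro!: sin_ge_zero cos_ge_zero)
  then have "(sin t)\<^sup>2 \<le> sin t" "(cos t)\<^sup>2 \<le> cos t"
    by (simp_all add: power2_eq_square mult_left_le_one_le)
  then show ?thesis
    using sin_cos_squared_add[of t] by linarith
qed

lemma quadratic_gt_one:
  fixes a r k s :: real
  assumes "a > 1" "r \<ge> 1" "0 \<le> k" "k \<le> s" "s\<^sup>2 = k*(2 - k)"
  shows "a\<^sup>2 - 2*r*k*a + 2*r\<^sup>2*k > 1"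
proof (cases "r*k \<le> 1")
  case True
  have "a\<^sup>2 - 2*r*k*a + 2*r\<^sup>2*k - 1 = (a - 1)*(a + 1 - 2*r*k) + 2*r*k*(r - 1)"
    by (simp add: algebra_simps power2_eq_square)
  moreover have "(a - 1)*(a + 1 - 2*r*k) > 0"
    using True assms(1) by (intro mult_pos_pos) auto
  moreover have "2*r*k*(r - 1) \<ge> 0"
    using assms(2,3) by simp
  ultimately show ?thesis
    by linarith
next
  case False
  have "r * s \<ge> r*k"
    using assms(2,4) by simp
  with False have "(r * s)\<^sup>2 > 1"
    by (simp add: one_less_power)
  moreover have "(r * s)\<^sup>2 = r\<^sup>2*(k*(2 - k))"
    by (simp add: power_mult_distrib assms(5))
  then have "a\<^sup>2 - 2*r*k*a + 2*r\<^sup>2*k = (a - r*k)\<^sup>2 + (r * s)\<^sup>2"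
    by (simp add: algebra_simps power2_eq_square)
  ultimately show ?thesis
    by (smt (verit) zero_le_power2)
qed

theorem lemma1:
  fixes z x y c u v :: "'a::euclidean_space" and r \<theta> :: real
  assumes "x \<notin> cball z 1"
    and "norm u = 1" and "norm v = 1" and "u \<bullet> v = 0"
    and "r \<ge> 1"
    and "0 \<le> \<theta>" and "\<theta> < pi / 2"
    and "x = circ_pt c r u v 0" and "y = circ_pt c r u v \<theta>"
    and "(x - z) \<bullet> vector_derivative (circ_pt c r u v) (at 0) \<ge> 0"
  shows "y \<notin> cball z 1"
proof -
  define w where "w = x - z"
  define k where "k = 1 - cos \<theta>"
  have a: "norm w > 1"
    using assms(1) by (simp add: w_def dist_norm norm_minus_commute)
  have "w \<bullet> v \<ge> 0"
    using assms(5,10) by (simp add: vector_derivative_circ_pt_0 w_def zero_le_mult_iff)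
  then have "r * sin \<theta> * (w \<bullet> v) \<ge> 0"
    using assms(5-7) by (simp add: sin_ge_zero)
  moreover have "r*k*(w \<bullet> u) \<le> r*k*norm w"
    using Cauchy_Schwarz_ineq2[of w u] assms(2,5) cos_le_one[of \<theta>]
    by (intro mult_left_mono) (auto simp: k_def)
  moreover have "(norm w)\<^sup>2 - 2*r*k*norm w + 2*r\<^sup>2*k > 1"
  proof (rule quadratic_gt_one[OF a assms(5)])
    show "0 \<le> k" "k \<le> sin \<theta>"
      using one_minus_cos_le_sin[of \<theta>] assms(6,7) by (auto simp: k_def)
    show "(sin \<theta>)\<^sup>2 = k*(2 - k)"
      by (simp add: k_def sin_squared_eq algebra_simps power2_eq_square)
  qed
  moreover have "(norm (y - z))\<^sup>2
      = (norm w)\<^sup>2 - 2*r*k*(w \<bullet> u) + 2*r * sin \<theta>*(w \<bullet> v) + 2*r\<^sup>2*k"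
    using circ_pt_dist_squared[OF assms(2-4), where t = \<theta>] assms(8,9) by (simp add: w_def k_def)
  ultimately have "(norm (y - z))\<^sup>2 > 1"
    by linarith
  then show ?thesis
    by (smt (verit) dist_norm norm_ge_zero norm_minus_commute mem_cball power_le_one)
qed

end
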